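(* Let $T$ be a tree with positive edge weights rooted at the homebase $r$, and let $q\ge 0$. If a cost-optimal strategy exploring $T$ uses only one agent, then that agent terminates in a leaf of $T$ at maximum distance from $r$.
   Context: Exploration model: given a connected graph with positive edge weights, a homebase vertex, and invoking cost $q\ge 0$, a strategy is a sequence of moves, each either invoking a new agent (appearing at the homebase) or an agent traversing an edge incident to its current vertex. A vertex is explored when first visited; the strategy explores the graph when every vertex has been visited by some agent (agents need not return). With $k$ agents, agent $i$ traversing total distance $d_i$ (weights counted with multiplicity), the cost is $kq+\sum_i d_i$; a strategy is cost-optimal if it explores the graph with minimum cost (off-line setting). Distances are weighted shortest-path distances; a leaf is a non-root vertex with no children. *)

theory Defs
  imports Complex_Main
begin

text \<open>A finite rooted tree with positive edge weights, given by a vertex set V,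
 root (homebase) r, a parent function par (meaningful on V - {r}) and a weight
 function w, where w v is the weight of the edge {v, par v}.  Every vertex
 reaches the root by iterating par, so the parent edges form a tree.\<close>
definition wtree :: "'a set \<Rightarrow> 'a \<Rightarrow> ('a \<Rightarrow> 'a) \<Rightarrow> ('a \<Rightarrow> real) \<Rightarrow> bool" where
  "wtree V r par w \<longleftrightarrow> finite V \<and> r \<in> V \<and>
     (\<forall>v\<in>V - {r}. par v \<in> V \<and> w v > 0) \<and>
     (\<forall>v\<in>V. \<exists>n. (par ^^ n) v = r)"

definition adj :: "'a set \<Rightarrow> 'a \<Rightarrow> ('a \<Rightarrow> 'a) \<Rightarrow> 'a \<Rightarrow> 'a \<Rightarrow> bool" where
  "adj V r par u v \<longleftrightarrow> u \<in> V \<and> v \<in> V \<and>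
     ((u \<noteq> r \<and> par u = v) \<or> (v \<noteq> r \<and> par v = u))"

definition ew :: "'a \<Rightarrow> ('a \<Rightarrow> 'a) \<Rightarrow> ('a \<Rightarrow> real) \<Rightarrow> 'a \<Rightarrow> 'a \<Rightarrow> real" where
  "ew r par w u v = (if u \<noteq> r \<and> par u = v then w u else w v)"

fun is_walk :: "'a set \<Rightarrow> 'a \<Rightarrow> ('a \<Rightarrow> 'a) \<Rightarrow> 'a list \<Rightarrow> bool" where
  "is_walk V r par [] = False"
| "is_walk V r par [u] = (u \<in> V)"
| "is_walk V r par (u # v # xs) = (adj V r par u v \<and> is_walk V r par (v # xs))"

fun walk_len :: "'a \<Rightarrow> ('a \<Rightarrow> 'a) \<Rightarrow> ('a \<Rightarrow> real) \<Rightarrow> 'a list \<Rightarrow> real" where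
  "walk_len r par w [] = 0"
| "walk_len r par w [u] = 0"
| "walk_len r par w (u # v # xs) = ew r par w u v + walk_len r par w (v # xs)"

definition tdist :: "'a set \<Rightarrow> 'a \<Rightarrow> ('a \<Rightarrow> 'a) \<Rightarrow> ('a \<Rightarrow> real) \<Rightarrow> 'a \<Rightarrow> 'a \<Rightarrow> real" where
  "tdist V r par w u v = Inf {walk_len r par w p | p. is_walk V r par p \<and> hd p = u \<and> last p = v}"

definition is_leaf :: "'a set \<Rightarrow> 'a \<Rightarrow> ('a \<Rightarrow> 'a) \<Rightarrow> 'a \<Rightarrow> bool" where
  "is_leaf V r par v \<longleftrightarrow> v \<in> V \<and> v \<noteq> r \<and> \<not> (\<exists>c\<in>V - {r}. par c = v)"

text \<open>Moves: invoke a new agent (placed at the homebase r; agents are numbered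
 0,1,... in order of invocation), or let agent i traverse an edge to vertex u.\<close>
datatype 'a move = Invoke | Traverse nat 'a

text \<open>Strategies are executed from the state with no agents; pos lists agent positions.\<close>
fun valid_strat :: "'a set \<Rightarrow> 'a \<Rightarrow> ('a \<Rightarrow> 'a) \<Rightarrow> 'a list \<Rightarrow> 'a move list \<Rightarrow> bool" where
  "valid_strat V r par pos [] = True"
| "valid_strat V r par pos (Invoke # ms) = valid_strat V r par (pos @ [r]) ms"
| "valid_strat V r par pos (Traverse i u # ms) =
     (i < length pos \<and> adj V r par (pos ! i) u \<and> valid_strat V r par (pos[i := u]) ms)"

fun final_pos :: "'a \<Rightarrow> 'a list \<Rightarrow> 'a move list \<Rightarrow> 'a list" where
  "final_pos r pos [] = pos"
| "final_pos r pos (Invoke # ms) = final_pos r (pos @ [r]) ms"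
| "final_pos r pos (Traverse i u # ms) = final_pos r (pos[i := u]) ms"

fun visited :: "'a \<Rightarrow> 'a move list \<Rightarrow> 'a set" where
  "visited r [] = {}"
| "visited r (Invoke # ms) = insert r (visited r ms)"
| "visited r (Traverse i u # ms) = insert u (visited r ms)"

fun num_agents :: "'a move list \<Rightarrow> nat" where
  "num_agents [] = 0"
| "num_agents (Invoke # ms) = Suc (num_agents ms)"
| "num_agents (Traverse i u # ms) = num_agents ms"

fun travel :: "'a \<Rightarrow> ('a \<Rightarrow> 'a) \<Rightarrow> ('a \<Rightarrow> real) \<Rightarrow> 'a list \<Rightarrow> 'a move list \<Rightarrow> real" where
  "travel r par w pos [] = 0"
| "travel r par w pos (Invoke # ms) = travel r par w (pos @ [r]) ms"
| "travel r par w pos (Traverse i u # ms) =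
     ew r par w (pos ! i) u + travel r par w (pos[i := u]) ms"

definition strat_cost :: "'a \<Rightarrow> ('a \<Rightarrow> 'a) \<Rightarrow> ('a \<Rightarrow> real) \<Rightarrow> real \<Rightarrow> 'a move list \<Rightarrow> real" where
  "strat_cost r par w q S = real (num_agents S) * q + travel r par w [] S"

definition explores :: "'a set \<Rightarrow> 'a \<Rightarrow> ('a \<Rightarrow> 'a) \<Rightarrow> 'a move list \<Rightarrow> bool" where
  "explores V r par S \<longleftrightarrow> valid_strat V r par [] S \<and> V \<subseteq> visited r S"

definition cost_optimal :: "'a set \<Rightarrow> 'a \<Rightarrow> ('a \<Rightarrow> 'a) \<Rightarrow> ('a \<Rightarrow> real) \<Rightarrow> real \<Rightarrow> 'a move list \<Rightarrow> bool" where
  "cost_optimal V r par w q S \<longleftrightarrow> explores V r par S \<and>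
     (\<forall>S'. explores V r par S' \<longrightarrow> strat_cost r par w q S \<le> strat_cost r par w q S')"

end

theory Submission
  imports Defs
begin

text \<open>Count, for every non-root vertex v, how often a walk from the root traverses the edge
  between v and its parent.  If the walk ends in the subtree of v, this edge is crossed at least
  once; if it only visits that subtree, at least twice.  So an exploring walk ending at e has
  length at least 2W - d(e), where W is the total edge weight and d(e) the depth of e.
  Conversely, a depth-first traversal that leaves the path to x for last achieves 2W - d(x)
  for every vertex x.  Hence a cost-optimal single agent stops at a vertex of maximum depth,
  and such a vertex has no children because the weights are positive.\<close>

lemma is_walk_Cons_in: "is_walk V r par (a # xs) \<Longrightarrow> a \<in> V"
  by (cases xs) (auto simp: adj_def)

lemma is_walk_set: "is_walk V r par p \<Longrightarrow> set p \<subseteq> V"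
  by (induction V r par p rule: is_walk.induct) (auto simp: adj_def)

lemma is_walk_not_Nil: "is_walk V r par p \<Longrightarrow> p \<noteq> []"
  by (cases p) auto

lemma is_walk_append_Cons:
  "is_walk V r par (xs @ y # ys) \<longleftrightarrow> is_walk V r par (xs @ [y]) \<and> is_walk V r par (y # ys)"
proof (induction xs)
  case Nil
  then show ?case using is_walk_Cons_in[of V r par y ys] by auto
next
  case (Cons a xs)
  then show ?case by (cases xs) auto
qed

lemma walk_len_append_Cons:
  "walk_len r par w (xs @ y # ys) = walk_len r par w (xs @ [y]) + walk_len r par w (y # ys)"
proof (induction xs)
  case (Cons a xs)
  then show ?case by (cases xs) auto
qed simp

lemma is_walk_snoc:
  assumes "p \<noteq> []"
  shows "is_walk V r par (p @ [x]) \<longleftrightarrow> is_walk V r par p \<and> adj V r par (last p) x"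
proof -
  have "is_walk V r par (p @ [x]) \<longleftrightarrow> is_walk V r par p \<and> is_walk V r par [last p, x]"
    using is_walk_append_Cons[of V r par "butlast p" "last p" "[x]"] assms
    by (metis append.assoc append_Cons append_Nil append_butlast_last_id)
  also have "is_walk V r par [last p, x] \<longleftrightarrow> adj V r par (last p) x"
    by (auto simp: adj_def)
  finally show ?thesis .
qed

lemma walk_len_snoc:
  assumes "p \<noteq> []"
  shows "walk_len r par w (p @ [x]) = walk_len r par w p + ew r par w (last p) x"
  using walk_len_append_Cons[of r par w "butlast p" "last p" "[x]"] assms
  by (metis append.assoc append_Cons append_Nil append_butlast_last_id walk_len.simps(2,3) add_0_right)

subsection \<open>Single-agent strategies are walks\<close>

lemma valid_strat_map_Traverse0:
  "is_walk V r par (a # ps) \<Longrightarrow> valid_strat V r par [a] (map (Traverse 0) ps)"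
  by (induction ps arbitrary: a) auto

lemma visited_map_Traverse: "visited r (map (Traverse i) ps) = set ps"
  by (induction ps) auto

lemma num_agents_map_Traverse: "num_agents (map (Traverse i) ps) = 0"
  by (induction ps) auto

lemma travel_map_Traverse0:
  "travel r par w [a] (map (Traverse 0) ps) = walk_len r par w (a # ps)"
  by (induction ps arbitrary: a) auto

lemma final_pos_map_Traverse0: "final_pos r [a] (map (Traverse 0) ps) = [last (a # ps)]"
  by (induction ps arbitrary: a) auto

lemma single_agent_moves:
  assumes "a \<in> V" "valid_strat V r par [a] ms" "num_agents ms = 0"
  obtains ps where "ms = map (Traverse 0) ps" "is_walk V r par (a # ps)"
  using assms
proof (induction ms arbitrary: a thesis)
  case Nil
  then show ?case by auto
next
  case (Cons m ms)
  obtain u where m: "m = Traverse 0 u" and au: "adj V r par a u"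
    and ms: "valid_strat V r par [u] ms" "num_agents ms = 0"
    by (cases m) (use Cons.prems in auto)
  then have "u \<in> V" by (auto simp: adj_def)
  with ms obtain ps where "ms = map (Traverse 0) ps" "is_walk V r par (u # ps)"
    using Cons.IH by blast
  then show ?case using Cons.prems(1)[of "u # ps"] m au by simp
qed

lemma single_agent_exploration_walk:
  assumes "explores V r par S" "num_agents S = 1" "r \<in> V"
  obtains p where "is_walk V r par p" "hd p = r" "V \<subseteq> set p"
    "final_pos r [] S ! 0 = last p" "strat_cost r par w q S = q + walk_len r par w p"
proof -
  have valid: "valid_strat V r par [] S" and covers: "V \<subseteq> visited r S"
    using assms(1) by (auto simp: explores_def)
  obtain ms where S: "S = Invoke # ms" and "num_agents ms = 0"
  proof (cases S)
    case (Cons m ms)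
    then show ?thesis using that assms(2) valid by (cases m) auto
  qed (use assms(2) in auto)
  moreover have "valid_strat V r par [r] ms" using valid S by simp
  ultimately obtain ps where "ms = map (Traverse 0) ps" "is_walk V r par (r # ps)"
    using single_agent_moves assms(3) by metis
  then show ?thesis
    using that[of "r # ps"] covers S
    by (simp add: strat_cost_def visited_map_Traverse num_agents_map_Traverse
        travel_map_Traverse0 final_pos_map_Traverse0)
qed

lemma exploration_of_walk:
  assumes "is_walk V r par p" "hd p = r" "V \<subseteq> set p"
  shows "explores V r par (Invoke # map (Traverse 0) (tl p))"
    and "strat_cost r par w q (Invoke # map (Traverse 0) (tl p)) = q + walk_len r par w p"
proof -
  have p: "p = r # tl p" using is_walk_not_Nil[OF assms(1)] assms(2) by (cases p) auto
  show "explores V r par (Invoke # map (Traverse 0) (tl p))"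
    using valid_strat_map_Traverse0[of V r par r "tl p"] assms p
    by (auto simp: explores_def visited_map_Traverse) (metis set_ConsD subsetD)
  show "strat_cost r par w q (Invoke # map (Traverse 0) (tl p)) = q + walk_len r par w p"
    using p by (simp add: strat_cost_def num_agents_map_Traverse)
      (metis travel_map_Traverse0)
qed

subsection \<open>Depth and crossing counts\<close>

definition descends :: "('a \<Rightarrow> 'a) \<Rightarrow> 'a \<Rightarrow> 'a \<Rightarrow> bool" where
  "descends par x v \<longleftrightarrow> (\<exists>n. (par ^^ n) x = v)"

lemma descends_refl: "descends par v v"
  unfolding descends_def by (metis funpow_0)

lemma descends_par: "descends par x v \<Longrightarrow> descends par x (par v)"
  unfolding descends_def by (metis comp_apply funpow.simps(2))

lemma descends_step: "descends par x v \<longleftrightarrow> x = v \<or> descends par (par x) v"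
  unfolding descends_def
  by (metis funpow_0 funpow_Suc_right o_apply not0_implies_Suc)

definition lower_end :: "'a \<Rightarrow> ('a \<Rightarrow> 'a) \<Rightarrow> 'a \<Rightarrow> 'a \<Rightarrow> 'a" where
  "lower_end r par a b = (if a \<noteq> r \<and> par a = b then a else b)"

fun edge_crossings :: "'a \<Rightarrow> ('a \<Rightarrow> 'a) \<Rightarrow> 'a \<Rightarrow> 'a list \<Rightarrow> nat" where
  "edge_crossings r par v (a # b # xs) =
     (if lower_end r par a b = v then 1 else 0) + edge_crossings r par v (b # xs)"
| "edge_crossings r par v _ = 0"

fun changes :: "('a \<Rightarrow> bool) \<Rightarrow> 'a list \<Rightarrow> nat" where
  "changes P (a # b # xs) = (if P a \<noteq> P b then 1 else 0) + changes P (b # xs)"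
| "changes P _ = 0"

lemma changes_lower_bound:
  "xs \<noteq> [] \<Longrightarrow> changes P xs \<ge>
     (if P (hd xs) \<noteq> P (last xs) then 1 else if \<exists>x\<in>set xs. P x \<noteq> P (hd xs) then 2 else 0)"
proof (induction P xs rule: changes.induct)
  case (1 P a b xs)
  have "hd (a # b # xs) = a" "last (a # b # xs) = last (b # xs)" "hd (b # xs) = b"
    "set (a # b # xs) = insert a (set (b # xs))"
    by auto
  then show ?case
    unfolding changes.simps using "1.IH"
    by (cases "P a"; cases "P b"; cases "P (last (b # xs))") (auto split: if_splits)
qed auto

locale rooted_tree =
  fixes V :: "'a set" and r :: 'a and par :: "'a \<Rightarrow> 'a" and w :: "'a \<Rightarrow> real"
  assumes wtree: "wtree V r par w" and par_root: "par r = r"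
begin

lemma finite_V: "finite V" and root_in_V: "r \<in> V"
  and weight_pos: "v \<in> V \<Longrightarrow> v \<noteq> r \<Longrightarrow> w v > 0"
  and reaches_root: "v \<in> V \<Longrightarrow> \<exists>n. (par ^^ n) v = r"
  using wtree unfolding wtree_def by auto

lemma par_in_V: "v \<in> V \<Longrightarrow> par v \<in> V"
  using wtree par_root unfolding wtree_def by (cases "v = r") auto

lemma funpow_par_root: "(par ^^ n) r = r"
  by (induction n) (auto simp: par_root)

lemma descends_from_root: "descends par r v \<Longrightarrow> v = r"
  unfolding descends_def using funpow_par_root by auto

lemma not_descends_par_self:
  assumes "v \<in> V" "v \<noteq> r"
  shows "\<not> descends par (par v) v"
proof
  assume "descends par (par v) v"
  then obtain n where "(par ^^ Suc n) v = v"
    unfolding descends_def by (metis funpow_Suc_right o_apply)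
  then have cycle: "((par ^^ Suc n) ^^ k) v = v" for k
    by (induction k) auto
  obtain m where m: "(par ^^ m) v = r" using reaches_root assms(1) by blast
  have "(par ^^ (Suc n * m)) v = v" using cycle[of m] by (simp only: funpow_mult)
  moreover have "Suc n * m = n * m + m" by simp
  then have "(par ^^ (Suc n * m)) v = (par ^^ (n * m)) ((par ^^ m) v)"
    by (simp only: funpow_add o_apply)
  ultimately show False using m funpow_par_root assms(2) by simp
qed

lemma par_neq_self: "v \<in> V \<Longrightarrow> v \<noteq> r \<Longrightarrow> par v \<noteq> v"
  using not_descends_par_self[of v] descends_refl[of par v] by auto

definition depth :: "'a \<Rightarrow> real" where
  "depth x = (\<Sum>v\<in>V - {r}. if descends par x v then w v else 0)"

definition weight :: "'a set \<Rightarrow> real" where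
  "weight U = (\<Sum>v\<in>U - {r}. w v)"

lemma depth_root: "depth r = 0"
  unfolding depth_def by (rule sum.neutral) (auto dest: descends_from_root)

lemma depth_nonneg: "depth x \<ge> 0"
  unfolding depth_def by (rule sum_nonneg) (auto dest: weight_pos intro: less_imp_le)

lemma depth_par:
  assumes "v \<in> V" "v \<noteq> r"
  shows "depth v = w v + depth (par v)"
proof -
  have "depth v = (\<Sum>u\<in>V - {r}. (if u = v then w u else 0)
                    + (if descends par (par v) u then w u else 0))"
    unfolding depth_def
    using descends_step[of par v] not_descends_par_self[OF assms] by (intro sum.cong) auto
  also have "\<dots> = w v + depth (par v)"
    unfolding depth_def sum.distrib using assms by (simp add: finite_V)
  finally show ?thesis .
qed

lemma weight_ancestors: "weight {u \<in> V. descends par v u} = depth v"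
proof -
  have "{u \<in> V. descends par v u} - {r} = {u \<in> V - {r}. descends par v u}" by auto
  moreover have "sum w {u \<in> V - {r}. descends par v u}
                   = (\<Sum>u\<in>V - {r}. if descends par v u then w u else 0)"
    using finite_V by (intro sum.inter_filter) auto
  ultimately show ?thesis unfolding weight_def depth_def by simp
qed

lemma lower_end_in_V: "adj V r par a b \<Longrightarrow> lower_end r par a b \<in> V - {r}"
  unfolding adj_def lower_end_def by auto

lemma ew_lower_end: "ew r par w a b = w (lower_end r par a b)"
  unfolding ew_def lower_end_def by auto

lemma lower_end_if_crossing:
  assumes "adj V r par a b" "descends par a v \<noteq> descends par b v"
  shows "lower_end r par a b = v"
proof (cases "a \<noteq> r \<and> par a = b")
  case True
  then show ?thesis using assms(2) descends_step[of par a v] unfolding lower_end_def by auto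
next
  case False
  with assms(1) have "b \<noteq> r" "par b = a" unfolding adj_def by auto
  then show ?thesis
    using False assms(2) descends_step[of par b v] unfolding lower_end_def by auto
qed

lemma walk_len_eq_sum_crossings:
  "is_walk V r par p \<Longrightarrow>
     walk_len r par w p = (\<Sum>v\<in>V - {r}. w v * real (edge_crossings r par v p))"
proof (induction p rule: induct_list012)
  case (3 a b xs)
  have ab: "lower_end r par a b \<in> V - {r}" using "3.prems" lower_end_in_V by simp
  have "(\<Sum>v\<in>V - {r}. w v * real (edge_crossings r par v (a # b # xs)))
      = (\<Sum>v\<in>V - {r}. if lower_end r par a b = v then w v else 0)
        + (\<Sum>v\<in>V - {r}. w v * real (edge_crossings r par v (b # xs)))"
    unfolding sum.distrib[symmetric] by (intro sum.cong) (auto simp: algebra_simps)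
  also have "\<dots> = walk_len r par w (a # b # xs)"
    using 3 ab finite_V by (simp add: sum.delta ew_lower_end)
  finally show ?case by simp
qed auto

lemma changes_le_edge_crossings:
  "is_walk V r par p \<Longrightarrow> changes (\<lambda>x. descends par x v) p \<le> edge_crossings r par v p"
proof (induction p rule: induct_list012)
  case (3 a b xs)
  then show ?case using lower_end_if_crossing[of a b v] by auto
qed auto

lemma walk_len_lower_bound:
  assumes "is_walk V r par p" "hd p = r"
  shows "(\<Sum>v\<in>V - {r}. w v * (if descends par (last p) v then 1 else if v \<in> set p then 2 else 0))
           \<le> walk_len r par w p"
  unfolding walk_len_eq_sum_crossings[OF assms(1)]
proof (rule sum_mono)
  fix v assume v: "v \<in> V - {r}"
  have "\<not> descends par (hd p) v" using assms(2) descends_from_root v by auto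
  then have "(if descends par (last p) v then 1 else if v \<in> set p then 2 else 0)
               \<le> changes (\<lambda>x. descends par x v) p"
    using changes_lower_bound[OF is_walk_not_Nil[OF assms(1)], of "\<lambda>x. descends par x v"]
      descends_refl[of par v] by (auto split: if_splits)
  also have "\<dots> \<le> edge_crossings r par v p" by (rule changes_le_edge_crossings[OF assms(1)])
  finally show "w v * (if descends par (last p) v then 1 else if v \<in> set p then 2 else 0)
                  \<le> w v * real (edge_crossings r par v p)"
    using weight_pos[of v] v by (intro mult_left_mono) auto
qed

lemma depth_le_walk_len:
  assumes "is_walk V r par p" "hd p = r"
  shows "depth (last p) \<le> walk_len r par w p"
proof -
  have "depth (last p)
          \<le> (\<Sum>v\<in>V - {r}. w v * (if descends par (last p) v then 1 else if v \<in> set p then 2 else 0))"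
    unfolding depth_def
  proof (rule sum_mono)
    fix v assume "v \<in> V - {r}"
    then have "w v > 0" by (simp add: weight_pos)
    then show "(if descends par (last p) v then w v else 0)
                 \<le> w v * (if descends par (last p) v then 1 else if v \<in> set p then 2 else 0)"
      by auto
  qed
  then show ?thesis using walk_len_lower_bound[OF assms] by simp
qed

lemma exploring_walk_len_lower_bound:
  assumes "is_walk V r par p" "hd p = r" "V \<subseteq> set p"
  shows "2 * weight V - depth (last p) \<le> walk_len r par w p"
proof -
  have "(\<Sum>v\<in>V - {r}. w v * (if descends par (last p) v then 1 else if v \<in> set p then 2 else 0))
          = 2 * weight V - depth (last p)"
    unfolding weight_def depth_def sum_distrib_left sum_subtractf[symmetric]
    using assms(3) by (intro sum.cong) auto
  then show ?thesis using walk_len_lower_bound[OF assms(1,2)] by simp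
qed

subsection \<open>Depth-first walks\<close>

lemma adj_par: "l \<in> V \<Longrightarrow> l \<noteq> r \<Longrightarrow> adj V r par (par l) l \<and> adj V r par l (par l)"
  unfolding adj_def using par_in_V by auto

lemma ew_up: "l \<noteq> r \<Longrightarrow> ew r par w l (par l) = w l"
  unfolding ew_def by auto

lemma ew_down:
  assumes "l \<in> V" "l \<noteq> r"
  shows "ew r par w (par l) l = w l"
proof -
  have "par (par l) \<noteq> l"
    using not_descends_par_self[OF assms] descends_step[of par "par l" l] descends_refl[of par l]
    by auto
  then show ?thesis unfolding ew_def by auto
qed

lemma walk_snoc_child:
  assumes "is_walk V r par p" "last p = par l" "l \<in> V" "l \<noteq> r"
  shows "is_walk V r par (p @ [l])" "walk_len r par w (p @ [l]) = walk_len r par w p + w l"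
proof -
  have p: "p \<noteq> []" using assms(1) by (rule is_walk_not_Nil)
  show "is_walk V r par (p @ [l])"
    using is_walk_snoc[OF p] assms adj_par[OF assms(3,4)] by simp
  show "walk_len r par w (p @ [l]) = walk_len r par w p + w l"
    using walk_len_snoc[OF p] assms(2) ew_down[OF assms(3,4)] by simp
qed

lemma walk_insert_detour:
  assumes "is_walk V r par (as @ par l # bs)" "l \<in> V" "l \<noteq> r"
  shows "is_walk V r par (as @ par l # l # par l # bs)"
    and "walk_len r par w (as @ par l # l # par l # bs) = walk_len r par w (as @ par l # bs) + 2 * w l"
proof -
  have prefix: "is_walk V r par (as @ [par l])" and suffix: "is_walk V r par (par l # bs)"
    using assms(1) is_walk_append_Cons[of V r par as "par l" bs] by simp_all
  have "is_walk V r par (par l # l # par l # bs)"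
    using suffix adj_par[OF assms(2,3)] by simp
  then show "is_walk V r par (as @ par l # l # par l # bs)"
    using prefix is_walk_append_Cons[of V r par as "par l" "l # par l # bs"] by blast
  have "walk_len r par w (par l # l # par l # bs) = 2 * w l + walk_len r par w (par l # bs)"
    using ew_up[OF assms(3)] ew_down[OF assms(2,3)] by simp
  then show "walk_len r par w (as @ par l # l # par l # bs)
               = walk_len r par w (as @ par l # bs) + 2 * w l"
    using walk_len_append_Cons[of r par w as "par l" "l # par l # bs"]
      walk_len_append_Cons[of r par w as "par l" bs] by linarith
qed

definition parent_closed :: "'a set \<Rightarrow> bool" where
  "parent_closed U \<longleftrightarrow> r \<in> U \<and> (\<forall>u\<in>U - {r}. par u \<in> U)"

lemma parent_closed_remove_deepest:
  assumes "U \<subseteq> V" "parent_closed U" "l \<in> U - {r}" "\<forall>u\<in>U - {r}. depth u \<le> depth l"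
  shows "parent_closed (U - {l})"
  unfolding parent_closed_def
proof (intro conjI ballI)
  show "r \<in> U - {l}" using assms(2,3) by (auto simp: parent_closed_def)
next
  fix u assume u: "u \<in> U - {l} - {r}"
  then have uV: "u \<in> V" "u \<noteq> r" using assms(1) by auto
  have "depth u = w u + depth (par u)" by (rule depth_par[OF uV])
  moreover have "depth u \<le> depth l" using assms(4) u by simp
  ultimately have "par u \<noteq> l" using weight_pos[OF uV] by auto
  then show "par u \<in> U - {l}" using assms(2) u by (auto simp: parent_closed_def)
qed

lemma weight_remove:
  assumes "finite U" "l \<in> U - {r}"
  shows "weight U = weight (U - {l}) + w l"
proof -
  have "U - {l} - {r} = U - {r} - {l}" by auto
  then show ?thesis using sum.remove[of "U - {r}" l w] assms by (simp add: weight_def)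
qed

text \<open>Induction on U, always splicing in a deepest vertex l of U as a detour at its parent,
  except when l is the endpoint, whose tree path is then traversed only once.\<close>
lemma parent_closed_walk:
  assumes "U \<subseteq> V" "parent_closed U" "x \<in> U"
  shows "\<exists>p. is_walk V r par p \<and> hd p = r \<and> last p = x \<and> set p = U
               \<and> walk_len r par w p \<le> 2 * weight U - depth x"
  using assms
proof (induction "card U" arbitrary: U x rule: less_induct)
  case less
  have fin: "finite U" using less.prems(1) finite_V finite_subset by blast
  have rU: "r \<in> U" using less.prems(2) by (simp add: parent_closed_def)
  show ?case
  proof (cases "U = {r}")
    case True
    then show ?thesis
      using less.prems(3) root_in_V by (intro exI[of _ "[r]"]) (auto simp: weight_def depth_root)
  next
    case False
    then have "U - {r} \<noteq> {}" using rU by auto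
    then have "Max (depth ` (U - {r})) \<in> depth ` (U - {r})" using fin by (intro Max_in) auto
    then obtain l where l: "l \<in> U - {r}" "Max (depth ` (U - {r})) = depth l" by auto
    then have deepest: "\<forall>u\<in>U - {r}. depth u \<le> depth l"
      using fin Max_ge[of "depth ` (U - {r})"] by auto
    have lV: "l \<in> V" "l \<noteq> r" using l less.prems(1) by auto
    have closed: "parent_closed (U - {l})"
      by (rule parent_closed_remove_deepest[OF less.prems(1,2) l(1) deepest])
    have smaller: "card (U - {l}) < card U" using card_Diff1_less[OF fin] l(1) by blast
    have pl: "par l \<in> U - {l}"
      using less.prems(2) l(1) par_neq_self[OF lV] by (auto simp: parent_closed_def)
    have weight: "weight U = weight (U - {l}) + w l" by (rule weight_remove[OF fin l(1)])
    show ?thesis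
    proof (cases "x = l")
      case True
      obtain p where p: "is_walk V r par p" "hd p = r" "last p = par l" "set p = U - {l}"
        "walk_len r par w p \<le> 2 * weight (U - {l}) - depth (par l)"
        using less.hyps[OF smaller _ closed pl] less.prems(1) by blast
      have "hd (p @ [l]) = r" "set (p @ [l]) = U"
        using p(2,4) is_walk_not_Nil[OF p(1)] l(1) by auto
      then show ?thesis
        using walk_snoc_child[OF p(1,3) lV] p(5) weight depth_par[OF lV] True
        by (intro exI[of _ "p @ [l]"]) simp
    next
      case False
      then have "x \<in> U - {l}" using less.prems(3) by simp
      then obtain p where p: "is_walk V r par p" "hd p = r" "last p = x" "set p = U - {l}"
        "walk_len r par w p \<le> 2 * weight (U - {l}) - depth x"
        using less.hyps[OF smaller _ closed] less.prems(1) by blast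
      obtain as bs where p_split: "p = as @ par l # bs" using pl p(4) split_list by metis
      define p' where "p' = as @ par l # l # par l # bs"
      have "hd p' = r" using p(2) unfolding p_split p'_def by (cases as) auto
      moreover have "last p' = x" using p(3) unfolding p_split p'_def by (cases bs) auto
      moreover have "set p' = U" using p(4) l(1) unfolding p_split p'_def by auto
      moreover have "walk_len r par w p' \<le> 2 * weight U - depth x"
        using walk_insert_detour(2)[OF p(1)[unfolded p_split] lV] p(5) weight
        unfolding p_split p'_def by linarith
      ultimately show ?thesis
        using walk_insert_detour(1)[OF p(1)[unfolded p_split] lV] unfolding p'_def by blast
    qed
  qed
qed

lemma tdist_root_eq_depth:
  assumes "v \<in> V"
  shows "tdist V r par w r v = depth v"
proof -
  define U where "U = {u \<in> V. descends par v u}"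
  have closed: "parent_closed U"
    unfolding parent_closed_def
  proof (intro conjI ballI)
    obtain n where "(par ^^ n) v = r" using reaches_root[OF assms] by blast
    then show "r \<in> U" using root_in_V unfolding U_def descends_def by auto
  next
    fix u assume "u \<in> U - {r}"
    then have "u \<in> V" "descends par v u" unfolding U_def by auto
    then show "par u \<in> U" unfolding U_def by (simp add: par_in_V descends_par)
  qed
  have "U \<subseteq> V" "v \<in> U" using assms descends_refl unfolding U_def by auto
  then obtain p where p: "is_walk V r par p" "hd p = r" "last p = v"
    "walk_len r par w p \<le> 2 * weight U - depth v"
    using parent_closed_walk[OF _ closed] by blast
  moreover have "weight U = depth v" unfolding U_def by (rule weight_ancestors)
  ultimately have p_len: "walk_len r par w p \<le> depth v" by simp
  define A where "A = {walk_len r par w p | p. is_walk V r par p \<and> hd p = r \<and> last p = v}"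
  have lower: "\<forall>a\<in>A. depth v \<le> a" unfolding A_def using depth_le_walk_len by auto
  have p_in: "walk_len r par w p \<in> A" unfolding A_def using p by auto
  have "Inf A \<le> walk_len r par w p"
    using lower p_in by (intro cInf_lower) (auto simp: bdd_below_def)
  moreover have "depth v \<le> Inf A" using p_in lower by (intro cInf_greatest) auto
  ultimately show ?thesis using p_len unfolding tdist_def A_def by linarith
qed

subsection \<open>Where a cost-optimal single agent stops\<close>

lemma optimal_single_agent_ends_deepest:
  assumes "cost_optimal V r par w q S" "num_agents S = 1"
  shows "final_pos r [] S ! 0 \<in> V" and "\<forall>x\<in>V. depth x \<le> depth (final_pos r [] S ! 0)"
proof -
  obtain p where p: "is_walk V r par p" "hd p = r" "V \<subseteq> set p"
    "final_pos r [] S ! 0 = last p" "strat_cost r par w q S = q + walk_len r par w p"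
    using single_agent_exploration_walk assms root_in_V unfolding cost_optimal_def by metis
  show "final_pos r [] S ! 0 \<in> V"
    using p(1,4) is_walk_set is_walk_not_Nil last_in_set by (metis subsetD)
  show "\<forall>x\<in>V. depth x \<le> depth (final_pos r [] S ! 0)"
  proof
    fix x assume "x \<in> V"
    moreover have "parent_closed V" using root_in_V par_in_V by (simp add: parent_closed_def)
    ultimately obtain p' where p': "is_walk V r par p'" "hd p' = r" "set p' = V"
      "walk_len r par w p' \<le> 2 * weight V - depth x"
      using parent_closed_walk[of V x] by blast
    let ?S' = "Invoke # map (Traverse 0) (tl p')"
    have "strat_cost r par w q S \<le> strat_cost r par w q ?S'"
      using assms(1) exploration_of_walk(1)[OF p'(1,2)] p'(3) by (simp add: cost_optimal_def)
    also have "\<dots> = q + walk_len r par w p'"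
      using exploration_of_walk(2)[OF p'(1,2)] p'(3) by simp
    finally have "depth x \<le> depth (last p)"
      using exploring_walk_len_lower_bound[OF p(1-3)] p(5) p'(4) by linarith
    then show "depth x \<le> depth (final_pos r [] S ! 0)" using p(4) by simp
  qed
qed

lemma deepest_is_leaf:
  assumes "V \<noteq> {r}" "e \<in> V" "\<forall>x\<in>V. depth x \<le> depth e"
  shows "is_leaf V r par e"
  unfolding is_leaf_def
proof (intro conjI notI)
  show "e \<in> V" by (rule assms(2))
next
  obtain x where x: "x \<in> V" "x \<noteq> r" using assms(1) root_in_V by blast
  then have "depth x > 0" using depth_par[OF x] weight_pos[OF x] depth_nonneg[of "par x"] by linarith
  moreover assume "e = r"
  ultimately show False using assms(3) x(1) depth_root by fastforce
next
  assume "\<exists>c\<in>V - {r}. par c = e"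
  then obtain c where c: "c \<in> V" "c \<noteq> r" "par c = e" by blast
  then have "depth c = w c + depth e" using depth_par[OF c(1,2)] by simp
  then show False using assms(3) c(1) weight_pos[OF c(1,2)] by fastforce
qed

end

text \<open>The value of par at the root is irrelevant to the exploration model, so it may be
  normalised to par r = r, as the locale assumes.\<close>

context
  fixes V :: "'a set" and r :: 'a and par par' :: "'a \<Rightarrow> 'a"
  assumes agree: "\<forall>u. u \<noteq> r \<longrightarrow> par' u = par u"
begin

lemma adj_par_cong: "adj V r par' = adj V r par"
  using agree unfolding adj_def by (intro ext) auto

lemma ew_par_cong: "ew r par' w = ew r par w"
  using agree unfolding ew_def by (intro ext) auto

lemma is_walk_par_cong: "is_walk V r par' p = is_walk V r par p"
  by (induction p rule: induct_list012) (auto simp: adj_par_cong)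

lemma walk_len_par_cong: "walk_len r par' w p = walk_len r par w p"
  by (induction p rule: induct_list012) (auto simp: ew_par_cong)

lemma valid_strat_par_cong: "valid_strat V r par' pos ms = valid_strat V r par pos ms"
proof (induction ms arbitrary: pos)
  case (Cons m ms)
  then show ?case by (cases m) (auto simp: adj_par_cong)
qed simp

lemma travel_par_cong: "travel r par' w pos ms = travel r par w pos ms"
proof (induction ms arbitrary: pos)
  case (Cons m ms)
  then show ?case by (cases m) (auto simp: ew_par_cong)
qed simp

lemma tdist_par_cong: "tdist V r par' w = tdist V r par w"
  unfolding tdist_def by (simp add: is_walk_par_cong walk_len_par_cong)

lemma cost_optimal_par_cong: "cost_optimal V r par' w q = cost_optimal V r par w q"
  unfolding cost_optimal_def explores_def strat_cost_def
  by (simp add: valid_strat_par_cong travel_par_cong)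

lemma is_leaf_par_cong: "is_leaf V r par' = is_leaf V r par"
  using agree unfolding is_leaf_def by (intro ext) auto

end

lemma wtree_fix_root:
  assumes "wtree V r par w"
  shows "wtree V r (par(r := r)) w"
proof -
  have "\<exists>k. ((par(r := r)) ^^ k) v = r" if "(par ^^ n) v = r" for n v
    using that
  proof (induction n arbitrary: v)
    case 0
    then show ?case by (metis funpow_0)
  next
    case (Suc n)
    show ?case
    proof (cases "v = r")
      case True
      then show ?thesis by (metis funpow_0)
    next
      case False
      have "(par ^^ n) (par v) = r" using Suc.prems by (metis funpow_Suc_right o_apply)
      then obtain k where "((par(r := r)) ^^ k) (par v) = r" using Suc.IH by blast
      moreover have "((par(r := r)) ^^ Suc k) v = ((par(r := r)) ^^ k) ((par(r := r)) v)"
        by (simp only: funpow_Suc_right o_apply)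
      ultimately have "((par(r := r)) ^^ Suc k) v = r" using False by simp
      then show ?thesis by blast
    qed
  qed
  then show ?thesis using assms unfolding wtree_def by auto
qed

theorem mainTheorem8:
  fixes V :: "'a set" and r :: 'a and par :: "'a \<Rightarrow> 'a" and w :: "'a \<Rightarrow> real"
    and q :: real and S :: "'a move list"
  assumes "wtree V r par w"
    and "V \<noteq> {r}"
    and "q \<ge> 0"
    and "cost_optimal V r par w q S"
    and "num_agents S = 1"
  shows "is_leaf V r par (final_pos r [] S ! 0) \<and>
         (\<forall>v\<in>V. tdist V r par w r v \<le> tdist V r par w r (final_pos r [] S ! 0))"
proof -
  define par' where "par' = par(r := r)"
  have agree: "\<forall>u. u \<noteq> r \<longrightarrow> par' u = par u" unfolding par'_def by simp
  interpret rooted_tree V r par' w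
    using wtree_fix_root[OF assms(1)] by unfold_locales (simp_all add: par'_def)
  have optimal: "cost_optimal V r par' w q S"
    using assms(4) cost_optimal_par_cong[OF agree] by simp
  note ends = optimal_single_agent_ends_deepest[OF optimal assms(5)]
  have "is_leaf V r par' (final_pos r [] S ! 0)"
    using deepest_is_leaf[OF assms(2) ends] .
  moreover have "\<forall>v\<in>V. tdist V r par' w r v \<le> tdist V r par' w r (final_pos r [] S ! 0)"
    using ends tdist_root_eq_depth by simp
  ultimately show ?thesis using is_leaf_par_cong[OF agree] tdist_par_cong[OF agree] by simp
qed

end
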